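(* Let $\mathcal{A}$ be a commutative $\sigma$-finite W*-algebra or a commutative AW*-algebra, and let $\mathcal{E}$ be a Hilbert C*-module over $\mathcal{A}$ of rank $d$. Let $n\geq d$ and let $\{\tau_j\}_{j=1}^n$ be a collection of vectors in $\mathcal{E}$ with $\langle \tau_j,\tau_j\rangle=1$ for all $1\leq j\leq n$. Then, for every $m\in\mathbb{N}$, \[ \sum_{j=1}^n\sum_{k=1}^n\|\langle \tau_j, \tau_k\rangle \|^{2m}\geq \sum_{j=1}^n\sum_{k=1}^n\langle \tau_j, \tau_k\rangle ^{m}\langle \tau_k, \tau_j\rangle ^{m}\geq \frac{1}{{d+m-1\choose m}}\left(\sum_{j=1}^{n}\langle \tau_j, \tau_j \rangle ^{m}\right)^2, \] in particular \[ \sum_{j=1}^n\sum_{k=1}^n\|\langle \tau_j, \tau_k\rangle \|^{2} \geq \sum_{j=1}^n\sum_{k=1}^n\langle \tau_j, \tau_k\rangle \langle \tau_k, \tau_j\rangle \geq \frac{1}{d}\left(\sum_{j=1}^{n}\langle \tau_j, \tau_j \rangle \right)^2. \] Further (for $n\geq 2$), for every $m\in\mathbb{N}$, \[ \max _{1\leq j,k \leq n,\, j\neq k}\|\langle \tau_j, \tau_k\rangle \|^{2m} \geq \frac{1}{n^2-n}\left[\frac{1}{{d+m-1\choose m}}\left(\sum_{j=1}^{n}\langle \tau_j, \tau_j \rangle ^{m}\right)^2-\sum_{j=1}^{n}\|\tau_j\|^{4m}\right], \] and in particular \[ \max _{1\leq j,k \leq n,\, j\neq k}\|\langle \tau_j,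 \tau_k\rangle \|^{2} \geq \frac{1}{n^2-n}\left[\frac{1}{d}\left(\sum_{j=1}^{n}\langle \tau_j, \tau_j \rangle \right)^2-\sum_{j=1}^{n}\|\tau_j\|^{4}\right]. \]
   Context: A W*-algebra is $\sigma$-finite if it contains at most countably many mutually orthogonal (nonzero) projections. A C*-algebra is an AW*-algebra if every set of orthogonal projections has a supremum and every maximal commutative self-adjoint subalgebra is generated by its projections. Such algebras are unital, with identity $1$. The $\mathcal{A}$-valued inner product on $\mathcal{E}$ is linear in the first variable and conjugate-linear in the second; $\mathcal{A}$ acts from the left; $\|\tau\|=\|\langle\tau,\tau\rangle\|^{1/2}$. $\mathcal{E}$ has rank $d$ if it has an orthonormal basis $\{\omega_j\}_{j=1}^d$, i.e. $\langle\omega_j,\omega_k\rangle=\delta_{jk}1$ and $x=\sum_{j=1}^d\langle x,\omega_j\rangle\omega_j$ for all $x\in\mathcal{E}$. Inequalities between elements of $\mathcal{A}$ refer to the order on self-adjoint elements, a real number $c$ being identified with $c\cdot1$. *)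

theory Defs
  imports Complex_Main
begin

text \<open>The carrier is a type 'a which is a
commutative unital real Banach algebra; the complex structure is given by an
element ii with ii*ii = -1 (complex scalar c acts as Re c *R x + Im c *R (ii*x)),
and st is the involution.  The C*-identity makes the norm complex-homogeneous.\<close>
definition cstar_comm ::
  "('a::{real_normed_algebra_1,comm_ring_1,banach} \<Rightarrow> 'a) \<Rightarrow> 'a \<Rightarrow> bool" where
  "cstar_comm st ii \<longleftrightarrow>
     ii * ii = -1 \<and> st ii = - ii \<and>
     (\<forall>x y. st (x + y) = st x + st y) \<and>
     (\<forall>(r::real) x. st (r *\<^sub>R x) = r *\<^sub>R st x) \<and>
     (\<forall>x y. st (x * y) = st y * st x) \<and>
     (\<forall>x. st (st x) = x) \<and>
     (\<forall>x. norm (st x * x) = (norm x)\<^sup>2)"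

definition csa_pos :: "('a::ring \<Rightarrow> 'a) \<Rightarrow> 'a \<Rightarrow> bool" where
  "csa_pos st x \<longleftrightarrow> (\<exists>y. x = st y * y)"

definition csa_le :: "('a::ring \<Rightarrow> 'a) \<Rightarrow> 'a \<Rightarrow> 'a \<Rightarrow> bool" where
  "csa_le st x y \<longleftrightarrow> csa_pos st (y - x)"

definition is_proj :: "('a::ring \<Rightarrow> 'a) \<Rightarrow> 'a \<Rightarrow> bool" where
  "is_proj st p \<longleftrightarrow> st p = p \<and> p * p = p"

definition star_subalg ::
  "('a::{real_normed_algebra_1,comm_ring_1,banach} \<Rightarrow> 'a) \<Rightarrow> 'a \<Rightarrow> 'a set \<Rightarrow> bool" where
  "star_subalg st ii B \<longleftrightarrow>
     0 \<in> B \<and> (\<forall>x\<in>B. \<forall>y\<in>B. x + y \<in> B \<and> x * y \<in> B) \<and>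
     (\<forall>x\<in>B. ii * x \<in> B \<and> st x \<in> B \<and> (\<forall>r::real. r *\<^sub>R x \<in> B)) \<and> closed B"

definition comm_set :: "'a::ring set \<Rightarrow> bool" where
  "comm_set B \<longleftrightarrow> (\<forall>x\<in>B. \<forall>y\<in>B. x * y = y * x)"

definition max_comm_star_subalg ::
  "('a::{real_normed_algebra_1,comm_ring_1,banach} \<Rightarrow> 'a) \<Rightarrow> 'a \<Rightarrow> 'a set \<Rightarrow> bool" where
  "max_comm_star_subalg st ii B \<longleftrightarrow>
     star_subalg st ii B \<and> comm_set B \<and>
     (\<forall>C. star_subalg st ii C \<and> comm_set C \<and> B \<subseteq> C \<longrightarrow> C = B)"

definition generated_star_subalg ::
  "('a::{real_normed_algebra_1,comm_ring_1,banach} \<Rightarrow> 'a) \<Rightarrow> 'a \<Rightarrow> 'a set \<Rightarrow> 'a set" where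
  "generated_star_subalg st ii S = \<Inter>{C. star_subalg st ii C \<and> S \<subseteq> C}"

definition is_proj_sup :: "('a::ring \<Rightarrow> 'a) \<Rightarrow> 'a set \<Rightarrow> 'a \<Rightarrow> bool" where
  "is_proj_sup st S q \<longleftrightarrow> is_proj st q \<and> (\<forall>p\<in>S. csa_le st p q) \<and>
     (\<forall>r. is_proj st r \<and> (\<forall>p\<in>S. csa_le st p r) \<longrightarrow> csa_le st q r)"

text \<open>Commutative AW*-algebra (Kaplansky's definition, literally).\<close>
definition aw_star_algebra ::
  "('a::{real_normed_algebra_1,comm_ring_1,banach} \<Rightarrow> 'a) \<Rightarrow> 'a \<Rightarrow> bool" where
  "aw_star_algebra st ii \<longleftrightarrow> cstar_comm st ii \<and>
     (\<forall>S. (\<forall>p\<in>S. is_proj st p) \<and> (\<forall>p\<in>S. \<forall>q\<in>S. p \<noteq> q \<longrightarrow> p * q = 0)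
          \<longrightarrow> (\<exists>q. is_proj_sup st S q)) \<and>
     (\<forall>B. max_comm_star_subalg st ii B \<longrightarrow>
          B = generated_star_subalg st ii {p\<in>B. is_proj st p})"

definition hm_norm :: "('e \<Rightarrow> 'e \<Rightarrow> 'a::real_normed_vector) \<Rightarrow> 'e \<Rightarrow> real" where
  "hm_norm ip x = sqrt (norm (ip x x))"

definition hilbert_cstar_module ::
  "('a::{real_normed_algebra_1,comm_ring_1,banach} \<Rightarrow> 'a) \<Rightarrow> 'a \<Rightarrow>
   ('a \<Rightarrow> 'e::ab_group_add \<Rightarrow> 'e) \<Rightarrow> ('e \<Rightarrow> 'e \<Rightarrow> 'a) \<Rightarrow> bool" where
  "hilbert_cstar_module st ii act ip \<longleftrightarrow> cstar_comm st ii \<and>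
     (\<forall>a b x. act (a + b) x = act a x + act b x) \<and>
     (\<forall>a x y. act a (x + y) = act a x + act a y) \<and>
     (\<forall>x. act 1 x = x) \<and>
     (\<forall>a b x. act (a * b) x = act a (act b x)) \<and>
     (\<forall>a x y z. ip (act a x + y) z = a * ip x z + ip y z) \<and>
     (\<forall>x y. ip y x = st (ip x y)) \<and>
     (\<forall>x. csa_pos st (ip x x)) \<and>
     (\<forall>x. ip x x = 0 \<longrightarrow> x = 0) \<and>
     (\<forall>X::nat \<Rightarrow> 'e. (\<forall>e>0. \<exists>N. \<forall>m\<ge>N. \<forall>n\<ge>N. hm_norm ip (X m - X n) < e)
          \<longrightarrow> (\<exists>l. (\<lambda>n. hm_norm ip (X n - l)) \<longlonglongrightarrow> 0))"

definition has_rank ::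
  "('a::comm_ring_1 \<Rightarrow> 'e::ab_group_add \<Rightarrow> 'e) \<Rightarrow> ('e \<Rightarrow> 'e \<Rightarrow> 'a) \<Rightarrow> nat \<Rightarrow> bool" where
  "has_rank act ip d \<longleftrightarrow> (\<exists>\<omega>::nat \<Rightarrow> 'e.
     (\<forall>j\<in>{1..d}. \<forall>k\<in>{1..d}. ip (\<omega> j) (\<omega> k) = (if j = k then 1 else 0)) \<and>
     (\<forall>x. x = (\<Sum>j=1..d. act (ip x (\<omega> j)) (\<omega> j))))"

end

theory Submission
  imports Defs "HOL-Computational_Algebra.Formal_Power_Series"
begin

text \<open>Welch's argument. Writing c_ji = <\<tau>_j, \<omega>_i>, the orthonormal expansion gives
  <\<tau>_j, \<tau>_k> = \<Sum>_i c_ji c_ki^*, so by the multinomial theorem the m-th power is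
  \<Sum>_\<alpha> V_j\<alpha> V_k\<alpha>^*, with \<alpha> ranging over the (d + m - 1 choose m) weak compositions
  of m into d parts. Exchanging the roles of j and \<alpha> turns the frame potential
  \<Sum>_jk <\<tau>_j, \<tau>_k>^m <\<tau>_k, \<tau>_j>^m into \<Sum>_\<alpha>\<beta> S_\<alpha>\<beta> S_\<beta>\<alpha> with S_\<alpha>\<beta> = \<Sum>_j V_j\<alpha> V_j\<beta>^*;
  subtracting the mean of the self-adjoint diagonal S_\<alpha>\<alpha> leaves a sum of elements y^* y.
  That such sums are again of the form y^* y holds in every commutative C*-algebra: positivity
  is equivalent to the norm condition \<parallel>t - x\<parallel> \<le> t, which is additive, and the converse
  direction takes square roots via the binomial series of sqrt (1 - x). The upper bound is a
  termwise norm estimate, and the bound on the largest off-diagonal entry follows by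
  comparing norms: n^2 / (d + m - 1 choose m) \<le> \<parallel>frame potential\<parallel> \<le> n + (n^2 - n) max.\<close>

definition sqrt_series_coeff :: "nat \<Rightarrow> real" where
  "sqrt_series_coeff k = ((1/2) gchoose k) * (-1) ^ k"

lemma sqrt_series_coeff_0: "sqrt_series_coeff 0 = 1"
  by (simp add: sqrt_series_coeff_def)

lemma sqrt_series_coeff_Suc:
  "sqrt_series_coeff (Suc k) = sqrt_series_coeff k * (real k - 1/2) / (real k + 1)"
proof -
  have "(1/2) * ((1/2) gchoose k) = of_nat k * ((1/2) gchoose k) + of_nat (Suc k) * ((1/2::real) gchoose (Suc k))"
    by (rule gbinomial_mult_1)
  then have Suc_eq: "(1/2::real) gchoose (Suc k) = (1/2 - real k) * ((1/2) gchoose k) / (real k + 1)"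
    by (simp add: field_simps)
  show ?thesis
    unfolding sqrt_series_coeff_def Suc_eq by (simp add: field_simps)
qed

lemma sqrt_series_coeff_nonpos: "k \<ge> 1 \<Longrightarrow> sqrt_series_coeff k \<le> 0"
proof (induction k)
  case (Suc k)
  then show ?case
    by (cases "k = 0")
      (auto simp: sqrt_series_coeff_Suc sqrt_series_coeff_0 divide_nonpos_pos mult_nonpos_nonneg)
qed simp

lemma sum_sqrt_series_coeff:
  "(\<Sum>k\<le>K. sqrt_series_coeff k) = - 2 * (real K + 1) * sqrt_series_coeff (Suc K)"
proof (induction K)
  case (Suc K)
  then show ?case
    using sqrt_series_coeff_Suc[of "Suc K"] by (simp add: field_simps)
qed (simp add: sqrt_series_coeff_Suc sqrt_series_coeff_0)

lemma summable_abs_sqrt_series_coeff: "summable (\<lambda>k. \<bar>sqrt_series_coeff k\<bar>)"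
proof (rule summableI_nonneg_bounded[where x = 2])
  fix n
  show "(\<Sum>k<n. \<bar>sqrt_series_coeff k\<bar>) \<le> 2"
  proof (cases n)
    case (Suc K)
    have "(\<Sum>k<n. \<bar>sqrt_series_coeff k\<bar>) = (\<Sum>k\<le>K. 2 * of_bool (k = 0) - sqrt_series_coeff k)"
      unfolding Suc lessThan_Suc_atMost
      by (intro sum.cong) (use sqrt_series_coeff_nonpos in \<open>auto simp: sqrt_series_coeff_0\<close>)
    also have "\<dots> = 2 - (\<Sum>k\<le>K. sqrt_series_coeff k)"
      by (simp add: sum_subtractf)
    also have "\<dots> \<le> 2"
      using sqrt_series_coeff_nonpos[of "Suc K"]
      by (simp add: sum_sqrt_series_coeff mult_nonpos_nonpos)
    finally show ?thesis .
  qed simp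
qed simp

lemma sqrt_series_coeff_convolution:
  "(\<Sum>i\<le>k. sqrt_series_coeff i * sqrt_series_coeff (k - i)) = (if k = 0 then 1 else if k = 1 then -1 else 0)"
proof -
  have "(\<Sum>i\<le>k. sqrt_series_coeff i * sqrt_series_coeff (k - i))
      = (\<Sum>i=0..k. ((1/2::real) gchoose i) * ((1/2) gchoose (k - i))) * (-1) ^ k"
    unfolding sqrt_series_coeff_def sum_distrib_right atMost_atLeast0
    by (rule sum.cong) (auto simp: power_add[symmetric])
  also have "\<dots> = ((1::real) gchoose k) * (-1) ^ k"
    using gbinomial_Vandermonde[of "1/2::real" "1/2" k] by simp
  also have "(1::real) gchoose k = of_nat (1 choose k)"
    using binomial_gbinomial[of 1 k, where 'a=real] by simp
  finally show ?thesis
    by (cases k; cases "k = 1") (auto simp: binomial_eq_0)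
qed

lemma
  fixes b :: "'a::{real_normed_algebra_1,banach}"
  assumes "norm b \<le> 1"
  shows summable_norm_sqrt_series: "summable (\<lambda>k. norm (sqrt_series_coeff k *\<^sub>R b ^ k))"
    and sqrt_series_square:
      "(\<Sum>k. sqrt_series_coeff k *\<^sub>R b ^ k) * (\<Sum>k. sqrt_series_coeff k *\<^sub>R b ^ k) = 1 - b"
proof -
  have "norm (b ^ k) \<le> 1" for k
    using norm_power_ineq[of b k] assms power_le_one[of "norm b" k] by simp
  then show summable: "summable (\<lambda>k. norm (sqrt_series_coeff k *\<^sub>R b ^ k))"
    by (intro summable_comparison_test'[OF summable_abs_sqrt_series_coeff]) (simp add: mult_left_le)
  have "(\<lambda>k. \<Sum>i\<le>k. (sqrt_series_coeff i *\<^sub>R b ^ i) * (sqrt_series_coeff (k - i) *\<^sub>R b ^ (k - i)))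
      = (\<lambda>k. if k \<in> {0, 1} then (if k = 0 then 1 else - b) else 0)"
  proof
    fix k
    have "(\<Sum>i\<le>k. (sqrt_series_coeff i *\<^sub>R b ^ i) * (sqrt_series_coeff (k - i) *\<^sub>R b ^ (k - i)))
        = (\<Sum>i\<le>k. sqrt_series_coeff i * sqrt_series_coeff (k - i)) *\<^sub>R b ^ k"
      unfolding scaleR_sum_left by (rule sum.cong) (auto simp: power_add[symmetric])
    then show "(\<Sum>i\<le>k. (sqrt_series_coeff i *\<^sub>R b ^ i) * (sqrt_series_coeff (k - i) *\<^sub>R b ^ (k - i)))
        = (if k \<in> {0, 1} then (if k = 0 then 1 else - b) else 0)"
      by (simp add: sqrt_series_coeff_convolution)
  qed
  moreover have "(\<lambda>k. if k \<in> {0::nat, 1} then (if k = 0 then 1 else - b) else 0) sums (1 - b)"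
    using sums_If_finite_set[of "{0::nat, 1}" "\<lambda>k. if k = 0 then 1 else - b"] by simp
  ultimately show "(\<Sum>k. sqrt_series_coeff k *\<^sub>R b ^ k) * (\<Sum>k. sqrt_series_coeff k *\<^sub>R b ^ k) = 1 - b"
    using Cauchy_product_sums[OF summable summable] sums_unique2 by fastforce
qed

locale comm_cstar =
  fixes st :: "'a::{real_normed_algebra_1,comm_ring_1,banach} \<Rightarrow> 'a" and ii :: 'a
  assumes cstar_comm: "cstar_comm st ii"
begin

lemma star_add: "st (x + y) = st x + st y"
  and star_scaleR: "st (r *\<^sub>R x) = r *\<^sub>R st x"
  and star_mult: "st (x * y) = st y * st x"
  and star_star: "st (st x) = x"
  and norm_star_mult_self: "norm (st x * x) = (norm x)\<^sup>2"
  and ii_mult_ii: "ii * ii = -1"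
  and star_ii: "st ii = - ii"
  using cstar_comm unfolding cstar_comm_def by blast+

lemma star_zero: "st 0 = 0"
  using star_scaleR[of 0 0] by simp

lemma star_minus: "st (- x) = - st x"
  using star_scaleR[of "-1" x] by simp

lemma star_diff: "st (x - y) = st x - st y"
  using star_add[of x "- y"] by (simp add: star_minus)

lemma star_one: "st 1 = 1"
  using star_mult[of "st 1" 1] by (simp add: star_star)

lemma star_power: "st (x ^ k) = st x ^ k"
  by (induction k) (simp_all add: star_one star_mult mult.commute)

lemma star_sum: "st (sum f A) = (\<Sum>a\<in>A. st (f a))"
  by (induction A rule: infinite_finite_induct) (simp_all add: star_zero star_add)

lemma norm_star: "norm (st x) = norm x"
proof -
  have le: "norm y \<le> norm (st y)" for y
  proof -
    have "(norm y)\<^sup>2 \<le> norm (st y) * norm y"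
      using norm_star_mult_self[of y] norm_mult_ineq[of "st y" y] by simp
    then show ?thesis
      by (cases "y = 0") (simp_all add: power2_eq_square)
  qed
  show ?thesis
    using le[of x] le[of "st x"] by (simp add: star_star)
qed

lemma norm_selfadjoint_square: "st h = h \<Longrightarrow> norm (h * h) = (norm h)\<^sup>2"
  using norm_star_mult_self[of h] by simp

lemma norm_ii_mult: "norm (ii * x) = norm x"
proof -
  have "st (ii * x) * (ii * x) = - (st x * x * (ii * ii))"
    by (simp add: star_mult star_ii algebra_simps)
  then have "st (ii * x) * (ii * x) = st x * x"
    by (simp add: ii_mult_ii)
  then have "(norm (ii * x))\<^sup>2 = (norm x)\<^sup>2"
    by (metis norm_star_mult_self)
  then show ?thesis by simp
qed

lemma selfadjoint_sqrt_one_minus: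
  assumes "norm b \<le> 1" "st b = b"
  obtains w where "w * w = 1 - b" "st w = w"
proof
  let ?w = "\<Sum>k. sqrt_series_coeff k *\<^sub>R b ^ k"
  show "?w * ?w = 1 - b"
    using sqrt_series_square[OF assms(1)] .
  have "bounded_linear st"
    by (rule bounded_linear_intro[where K = 1]) (simp_all add: star_add star_scaleR norm_star)
  then have "st ?w = (\<Sum>k. st (sqrt_series_coeff k *\<^sub>R b ^ k))"
    using bounded_linear.suminf summable_norm_cancel[OF summable_norm_sqrt_series[OF assms(1)]]
    by blast
  then show "st ?w = ?w"
    by (simp only: star_scaleR star_power assms(2))
qed

text \<open>Norm characterisation of positivity (x is self-adjoint with spectrum in [0, 2t]);
  unlike csa_pos, it is visibly closed under addition.\<close>
definition nonneg :: "'a \<Rightarrow> bool" where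
  "nonneg x \<longleftrightarrow> st x = x \<and> (\<exists>t\<ge>0. norm (t *\<^sub>R 1 - x) \<le> t)"

lemma nonneg_add:
  assumes "nonneg x" "nonneg y"
  shows "nonneg (x + y)"
proof -
  obtain s t where "st x = x" "st y = y" "s \<ge> 0" "t \<ge> 0"
    and s: "norm (s *\<^sub>R 1 - x) \<le> s" and t: "norm (t *\<^sub>R 1 - y) \<le> t"
    using assms unfolding nonneg_def by blast
  moreover have "norm ((s + t) *\<^sub>R 1 - (x + y)) \<le> s + t"
    using norm_triangle_ineq[of "s *\<^sub>R 1 - x" "t *\<^sub>R 1 - y"] s t
    by (simp add: algebra_simps)
  ultimately show ?thesis
    unfolding nonneg_def by (intro conjI exI[of _ "s + t"]) (simp_all add: star_add)
qed

lemma nonneg_selfadjoint_square: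
  assumes "st h = h"
  shows "nonneg (h * h)"
proof (cases "h = 0")
  case True
  then show ?thesis by (auto simp: nonneg_def star_zero)
next
  case False
  define t where "t = norm h"
  define k where "k = (1 / t) *\<^sub>R h"
  have "t > 0" using False by (simp add: t_def)
  have k: "norm k = 1" "st k = k"
    using \<open>t > 0\<close> by (simp_all add: k_def t_def star_scaleR assms)
  then have "norm (k * k) \<le> 1" "st (k * k) = k * k"
    by (simp_all add: norm_selfadjoint_square star_mult)
  then obtain w where w: "w * w = 1 - k * k" "st w = w"
    by (rule selfadjoint_sqrt_one_minus)
  \<comment> \<open>k + ii w is unitary, so its imaginary part w is a contraction\<close>
  define u where "u = k + ii * w"
  have "st u * u = k * k - (ii * ii) * (w * w)"
    unfolding u_def by (simp add: star_add star_mult star_ii k w(2) algebra_simps)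
  then have "(norm u)\<^sup>2 = 1"
    using norm_star_mult_self[of u] by (simp add: ii_mult_ii w(1))
  then have "norm u = 1"
    using norm_ge_zero[of u] by (auto simp: power2_eq_1_iff)
  have "u - st u = 2 *\<^sub>R (ii * w)"
    unfolding u_def by (simp add: star_add star_mult star_ii k w(2) algebra_simps scaleR_2)
  then have "2 * norm w = norm (u - st u)"
    by (simp add: norm_ii_mult)
  also have "\<dots> \<le> 2"
    using norm_triangle_ineq4[of u "st u"] \<open>norm u = 1\<close> by (simp add: norm_star)
  finally have "norm (1 - k * k) \<le> 1"
    using w norm_selfadjoint_square[OF w(2)] by (simp add: power_le_one)
  moreover have "t\<^sup>2 *\<^sub>R 1 - h * h = t\<^sup>2 *\<^sub>R (1 - k * k)"
    unfolding k_def using \<open>t > 0\<close> by (simp add: algebra_simps power2_eq_square)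
  ultimately have "norm (t\<^sup>2 *\<^sub>R 1 - h * h) \<le> t\<^sup>2"
    by (simp add: mult_left_le)
  then show ?thesis
    unfolding nonneg_def by (intro conjI exI[of _ "t\<^sup>2"]) (simp_all add: star_mult assms)
qed

lemma nonneg_star_mult_self: "nonneg (st y * y)"
proof -
  define h where "h = (1/2) *\<^sub>R (y + st y)"
  define k where "k = (1/2) *\<^sub>R (- ii * (y - st y))"
  have "h * h + k * k = (1/4) *\<^sub>R ((y + st y) * (y + st y) + (ii * ii) * ((y - st y) * (y - st y)))"
    unfolding h_def k_def by (simp add: algebra_simps)
  also have "\<dots> = (1/4) *\<^sub>R (4 *\<^sub>R (st y * y))"
    by (simp add: ii_mult_ii algebra_simps scaleR_conv_of_real of_real_numeral)
  finally have "h * h + k * k = st y * y"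
    by simp
  moreover have "st h = h" "st k = k"
    unfolding h_def k_def
    by (simp_all add: star_scaleR star_add star_mult star_minus star_diff star_star star_ii algebra_simps)
  ultimately show ?thesis
    by (metis nonneg_add nonneg_selfadjoint_square)
qed

lemma csa_pos_if_nonneg:
  assumes "nonneg x"
  shows "csa_pos st x"
proof -
  obtain t where "st x = x" "t \<ge> 0" and t: "norm (t *\<^sub>R 1 - x) \<le> t"
    using assms unfolding nonneg_def by blast
  show ?thesis
  proof (cases "t = 0")
    case True
    then show ?thesis
      using t unfolding csa_pos_def by (intro exI[of _ 0]) (simp add: star_zero)
  next
    case False
    with \<open>t \<ge> 0\<close> have "t > 0" by simp
    define b where "b = 1 - (1 / t) *\<^sub>R x"
    have "b = (1 / t) *\<^sub>R (t *\<^sub>R 1 - x)"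
      unfolding b_def using \<open>t > 0\<close> by (simp add: algebra_simps)
    then have "norm b \<le> 1"
      using t \<open>t > 0\<close> by (simp add: divide_le_eq)
    moreover have "st b = b"
      unfolding b_def by (simp add: star_diff star_one star_scaleR \<open>st x = x\<close>)
    ultimately obtain w where w: "w * w = 1 - b" "st w = w"
      by (rule selfadjoint_sqrt_one_minus)
    have "st (sqrt t *\<^sub>R w) * (sqrt t *\<^sub>R w) = x"
      using \<open>t > 0\<close> by (simp add: star_scaleR w b_def)
    then show ?thesis
      unfolding csa_pos_def by metis
  qed
qed

lemma csa_pos_iff_nonneg: "csa_pos st x \<longleftrightarrow> nonneg x"
  by (metis csa_pos_def csa_pos_if_nonneg nonneg_star_mult_self)

lemma csa_pos_add: "csa_pos st x \<Longrightarrow> csa_pos st y \<Longrightarrow> csa_pos st (x + y)"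
  by (simp add: csa_pos_iff_nonneg nonneg_add)

lemma csa_pos_sum: "(\<And>a. a \<in> A \<Longrightarrow> csa_pos st (f a)) \<Longrightarrow> csa_pos st (sum f A)"
proof (induction A rule: infinite_finite_induct)
  case (insert a A)
  then show ?case by (simp add: csa_pos_add)
qed (simp_all add: csa_pos_def exI[of _ 0])

lemma csa_le_sum: "(\<And>a. a \<in> A \<Longrightarrow> csa_le st (f a) (g a)) \<Longrightarrow> csa_le st (sum f A) (sum g A)"
  unfolding csa_le_def sum_subtractf[symmetric] by (rule csa_pos_sum)

lemma csa_le_scaleR_one_if_norm_le:
  assumes "st x = x" "norm x \<le> r"
  shows "csa_le st x (r *\<^sub>R 1)"
proof -
  have "r \<ge> 0"
    using assms(2) norm_ge_zero[of x] by linarith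
  with assms have "nonneg (r *\<^sub>R 1 - x)"
    unfolding nonneg_def by (intro conjI exI[of _ r]) (simp_all add: star_diff star_scaleR star_one)
  then show ?thesis
    by (simp add: csa_le_def csa_pos_iff_nonneg)
qed

lemma csa_le_scaleR_one: "a \<le> b \<Longrightarrow> csa_le st (a *\<^sub>R 1) (b *\<^sub>R 1)"
  using csa_le_scaleR_one_if_norm_le[of 0 "b - a"]
  by (simp add: csa_le_def star_zero algebra_simps)

lemma le_norm_if_csa_le:
  assumes "c \<ge> 0" "csa_le st (c *\<^sub>R 1) x"
  shows "c \<le> norm x"
proof -
  obtain t where "t \<ge> 0" and t: "norm (t *\<^sub>R 1 - (x - c *\<^sub>R 1)) \<le> t"
    using assms(2) unfolding csa_le_def csa_pos_iff_nonneg nonneg_def by blast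
  have "(t + c) *\<^sub>R (1::'a) = (t *\<^sub>R 1 - (x - c *\<^sub>R 1)) + x"
    by (simp add: algebra_simps)
  then have "norm ((t + c) *\<^sub>R (1::'a)) \<le> norm (t *\<^sub>R 1 - (x - c *\<^sub>R 1)) + norm x"
    by (metis norm_triangle_ineq)
  then show ?thesis
    using t \<open>t \<ge> 0\<close> assms(1) by simp
qed

end

fun weak_compositions :: "nat \<Rightarrow> nat \<Rightarrow> nat list set" where
  "weak_compositions 0 m = (if m = 0 then {[]} else {})"
| "weak_compositions (Suc d) m = (\<Union>l\<in>{0..m}. (#) l ` weak_compositions d (m - l))"

lemma length_weak_compositions: "\<alpha> \<in> weak_compositions d m \<Longrightarrow> length \<alpha> = d"
  by (induction d arbitrary: m \<alpha>) (auto split: if_splits)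

lemma finite_weak_compositions: "finite (weak_compositions d m)"
  by (induction d arbitrary: m) auto

lemma card_weak_compositions: "card (weak_compositions d m) = (d + m - 1) choose m"
proof (induction d arbitrary: m)
  case (Suc d)
  have "card (weak_compositions (Suc d) m) = (\<Sum>l\<in>{0..m}. card ((#) l ` weak_compositions d (m - l)))"
    by simp (rule card_UN_disjoint, auto simp: finite_weak_compositions)
  also have "\<dots> = (\<Sum>l\<in>{0..m}. (d + (m - l) - 1) choose (m - l))"
    by (rule sum.cong) (auto simp: card_image Suc)
  also have "\<dots> = (\<Sum>k\<le>m. (d + k - 1) choose k)"
    by (rule sum.reindex_bij_witness[where i="\<lambda>k. m - k" and j="\<lambda>l. m - l"]) auto
  also have "\<dots> = (Suc d + m - 1) choose m"
  proof (cases d)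
    case 0
    then show ?thesis
      by (simp add: binomial_eq_0 sum.atMost_shift del: sum.atMost_Suc)
  next
    case (Suc r)
    then show ?thesis
      using sum_choose_lower[of r m] by simp
  qed
  finally show ?case .
qed simp

text \<open>Coordinates of the symmetric tensor power of c: the one indexed by \<alpha> is the square root
  of the multinomial coefficient of \<alpha> times the product of the c i ^ \<alpha>_i, where the head
  of a composition of length d is the exponent of c d.\<close>
fun sym_tensor_coord :: "(nat \<Rightarrow> 'a::real_algebra_1) \<Rightarrow> nat \<Rightarrow> nat list \<Rightarrow> 'a" where
  "sym_tensor_coord c m [] = 1"
| "sym_tensor_coord c m (l # \<alpha>) =
     sqrt (real (m choose l)) *\<^sub>R (c (Suc (length \<alpha>)) ^ l * sym_tensor_coord c (m - l) \<alpha>)"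

lemma sum_sym_tensor_coord_mult:
  fixes a b :: "nat \<Rightarrow> 'a::{real_algebra_1,comm_ring_1}"
  shows "(\<Sum>\<alpha>\<in>weak_compositions d m. sym_tensor_coord a m \<alpha> * sym_tensor_coord b m \<alpha>)
    = (\<Sum>i=1..d. a i * b i) ^ m"
proof (induction d arbitrary: m)
  case 0
  then show ?case by (cases m) simp_all
next
  case (Suc d)
  let ?x = "a (Suc d) * b (Suc d)"
  let ?V = "\<lambda>c m \<alpha>. sym_tensor_coord c m \<alpha>"
  have "(\<Sum>\<alpha>\<in>weak_compositions (Suc d) m. ?V a m \<alpha> * ?V b m \<alpha>)
      = (\<Sum>l\<in>{0..m}. \<Sum>\<alpha>\<in>(#) l ` weak_compositions d (m - l). ?V a m \<alpha> * ?V b m \<alpha>)"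
    by simp (rule sum.UNION_disjoint, auto simp: finite_weak_compositions)
  also have "\<dots> = (\<Sum>l\<in>{0..m}. \<Sum>\<alpha>\<in>weak_compositions d (m - l). ?V a m (l # \<alpha>) * ?V b m (l # \<alpha>))"
    by (simp add: sum.reindex)
  also have "\<dots> = (\<Sum>l\<in>{0..m}. real (m choose l) *\<^sub>R
      (?x ^ l * (\<Sum>\<alpha>\<in>weak_compositions d (m - l). ?V a (m - l) \<alpha> * ?V b (m - l) \<alpha>)))"
    by (intro sum.cong refl)
      (simp add: length_weak_compositions scaleR_sum_right sum_distrib_left power_mult_distrib
        algebra_simps)
  also have "\<dots> = (?x + (\<Sum>i=1..d. a i * b i)) ^ m"
    by (simp add: Suc.IH binomial_ring atMost_atLeast0 scaleR_conv_of_real mult.assoc)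
  finally show ?case
    by (simp add: add.commute)
qed

lemma (in comm_cstar) star_sym_tensor_coord:
  "st (sym_tensor_coord c m \<alpha>) = sym_tensor_coord (\<lambda>i. st (c i)) m \<alpha>"
  by (induction \<alpha> arbitrary: m) (simp_all add: star_one star_scaleR star_mult star_power mult.commute)

lemma sum_sum_gram_products:
  fixes V W :: "'j \<Rightarrow> 'i \<Rightarrow> 'a::comm_semiring_1"
  shows "(\<Sum>j\<in>J. \<Sum>k\<in>J. (\<Sum>\<alpha>\<in>I. V j \<alpha> * W k \<alpha>) * (\<Sum>\<beta>\<in>I. V k \<beta> * W j \<beta>))
    = (\<Sum>\<alpha>\<in>I. \<Sum>\<beta>\<in>I. (\<Sum>j\<in>J. V j \<alpha> * W j \<beta>) * (\<Sum>k\<in>J. V k \<beta> * W k \<alpha>))"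
proof -
  have "(\<Sum>j\<in>J. \<Sum>k\<in>J. (\<Sum>\<alpha>\<in>I. V j \<alpha> * W k \<alpha>) * (\<Sum>\<beta>\<in>I. V k \<beta> * W j \<beta>))
      = (\<Sum>j\<in>J. \<Sum>k\<in>J. \<Sum>\<alpha>\<in>I. \<Sum>\<beta>\<in>I. (V j \<alpha> * W j \<beta>) * (V k \<beta> * W k \<alpha>))"
    unfolding sum_product by (intro sum.cong refl) (simp add: algebra_simps)
  also have "\<dots> = (\<Sum>j\<in>J. \<Sum>\<alpha>\<in>I. \<Sum>\<beta>\<in>I. \<Sum>k\<in>J. (V j \<alpha> * W j \<beta>) * (V k \<beta> * W k \<alpha>))"
    by (intro sum.cong refl, subst sum.swap) (simp add: sum.swap[of _ J I])
  also have "\<dots> = (\<Sum>\<alpha>\<in>I. \<Sum>\<beta>\<in>I. \<Sum>j\<in>J. \<Sum>k\<in>J. (V j \<alpha> * W j \<beta>) * (V k \<beta> * W k \<alpha>))"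
    by (subst sum.swap) (simp add: sum.swap[of _ J I])
  finally show ?thesis
    by (simp only: sum_product)
qed

lemma sum_square_sub_mean:
  fixes s :: "'i \<Rightarrow> 'a::{real_algebra_1,comm_ring_1}"
  assumes "finite I"
  shows "(\<Sum>\<alpha>\<in>I. (s \<alpha> - (1 / real (card I)) *\<^sub>R sum s I)\<^sup>2)
    = (\<Sum>\<alpha>\<in>I. (s \<alpha>)\<^sup>2) - (1 / real (card I)) *\<^sub>R (sum s I)\<^sup>2"
proof (cases "I = {}")
  case False
  define c where "c = 1 / real (card I)"
  define T where "T = sum s I"
  have "(\<Sum>\<alpha>\<in>I. (s \<alpha> - c *\<^sub>R T)\<^sup>2)
      = (\<Sum>\<alpha>\<in>I. (s \<alpha>)\<^sup>2 - 2 * (c *\<^sub>R (s \<alpha> * T)) + (c * c) *\<^sub>R T\<^sup>2)"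
    by (intro sum.cong) (simp_all add: power2_eq_square algebra_simps scaleR_conv_of_real)
  also have "\<dots> = (\<Sum>\<alpha>\<in>I. (s \<alpha>)\<^sup>2) - 2 * (c *\<^sub>R T\<^sup>2) + (real (card I) * c * c) *\<^sub>R T\<^sup>2"
    by (simp add: sum.distrib sum_subtractf scaleR_sum_right[symmetric] sum_distrib_left[symmetric]
        sum_distrib_right[symmetric] T_def power2_eq_square)
      (simp add: scaleR_conv_of_real algebra_simps)
  also have "real (card I) * c = 1"
    using False assms by (simp add: c_def)
  finally show ?thesis
    unfolding c_def[symmetric] T_def[symmetric] by (simp add: algebra_simps scaleR_conv_of_real)
qed simp

context comm_cstar
begin

lemma welch_bound:
  fixes V :: "'j \<Rightarrow> 'i \<Rightarrow> 'a"
  assumes "finite I"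
    and G: "\<And>j k. G j k = (\<Sum>\<alpha>\<in>I. V j \<alpha> * st (V k \<alpha>))"
  shows "csa_le st ((1 / real (card I)) *\<^sub>R (\<Sum>j\<in>J. G j j)\<^sup>2) (\<Sum>j\<in>J. \<Sum>k\<in>J. G j k * G k j)"
proof -
  define S where "S \<alpha> \<beta> = (\<Sum>j\<in>J. V j \<alpha> * st (V j \<beta>))" for \<alpha> \<beta>
  define \<mu> where "\<mu> = (1 / real (card I)) *\<^sub>R (\<Sum>\<alpha>\<in>I. S \<alpha> \<alpha>)"
  have S_swap: "S \<beta> \<alpha> = st (S \<alpha> \<beta>)" for \<alpha> \<beta>
    unfolding S_def by (simp add: star_sum star_mult star_star mult.commute)
  have diag_selfadjoint: "st (S \<alpha> \<alpha>) = S \<alpha> \<alpha>" for \<alpha>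
    using S_swap[of \<alpha> \<alpha>] by simp
  have trace: "(\<Sum>j\<in>J. G j j) = (\<Sum>\<alpha>\<in>I. S \<alpha> \<alpha>)"
    unfolding G S_def by (rule sum.swap)
  \<comment> \<open>the frame potential of the j-indexed vectors equals that of the \<alpha>-indexed ones\<close>
  have "(\<Sum>j\<in>J. \<Sum>k\<in>J. G j k * G k j) = (\<Sum>\<alpha>\<in>I. \<Sum>\<beta>\<in>I. S \<alpha> \<beta> * S \<beta> \<alpha>)"
    unfolding G S_def by (rule sum_sum_gram_products)
  also have "\<dots> = (\<Sum>\<alpha>\<in>I. (S \<alpha> \<alpha>)\<^sup>2) + (\<Sum>\<alpha>\<in>I. \<Sum>\<beta>\<in>I - {\<alpha>}. S \<alpha> \<beta> * S \<beta> \<alpha>)"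
    by (simp add: sum.distrib sum.remove[OF assms(1)] power2_eq_square)
  finally have "(\<Sum>j\<in>J. \<Sum>k\<in>J. G j k * G k j) - (1 / real (card I)) *\<^sub>R (\<Sum>j\<in>J. G j j)\<^sup>2
      = (\<Sum>\<alpha>\<in>I. (S \<alpha> \<alpha> - \<mu>)\<^sup>2) + (\<Sum>\<alpha>\<in>I. \<Sum>\<beta>\<in>I - {\<alpha>}. S \<alpha> \<beta> * S \<beta> \<alpha>)"
    using sum_square_sub_mean[OF assms(1), of "\<lambda>\<alpha>. S \<alpha> \<alpha>"] by (simp add: trace \<mu>_def)
  moreover have "(S \<alpha> \<alpha> - \<mu>)\<^sup>2 = st (S \<alpha> \<alpha> - \<mu>) * (S \<alpha> \<alpha> - \<mu>)" for \<alpha>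
    by (simp add: \<mu>_def star_diff star_scaleR star_sum diag_selfadjoint power2_eq_square)
  moreover have "S \<alpha> \<beta> * S \<beta> \<alpha> = st (S \<alpha> \<beta>) * S \<alpha> \<beta>" for \<alpha> \<beta>
    using S_swap[of \<beta> \<alpha>] by (simp add: mult.commute)
  ultimately show ?thesis
    unfolding csa_le_def by (simp only:) (intro csa_pos_add csa_pos_sum; auto simp: csa_pos_def)
qed

lemma norm_power_mult_star_power: "norm (x ^ m * st x ^ m) \<le> norm x ^ (2 * m)"
proof -
  have "norm (x ^ m * st x ^ m) \<le> norm x ^ m * norm (st x) ^ m"
    using norm_mult_ineq[of "x ^ m" "st x ^ m"] norm_power_ineq[of x m] norm_power_ineq[of "st x" m]
    by (meson mult_mono norm_ge_zero order_trans)
  then show ?thesis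
    by (simp add: norm_star power_mult power2_eq_square power_mult_distrib)
qed

lemma frame_potential_le_norms:
  assumes "\<And>j k. G k j = st (G j k)"
  shows "csa_le st (\<Sum>j\<in>J. \<Sum>k\<in>J. G j k ^ m * G k j ^ m) ((\<Sum>j\<in>J. \<Sum>k\<in>J. norm (G j k) ^ (2 * m)) *\<^sub>R 1)"
proof -
  have "G j k ^ m * G k j ^ m = G j k ^ m * st (G j k) ^ m" for j k
    by (simp only: assms[where j = j and k = k])
  then show ?thesis
    unfolding scaleR_sum_left
    by (simp only:) (intro csa_le_sum csa_le_scaleR_one_if_norm_le norm_power_mult_star_power;
        simp add: star_mult star_power star_star mult.commute)
qed

lemma norm_frame_potential_le:
  assumes "\<And>j k. G k j = st (G j k)"
  shows "norm (\<Sum>j\<in>J. \<Sum>k\<in>J. G j k ^ m * G k j ^ m) \<le> (\<Sum>j\<in>J. \<Sum>k\<in>J. norm (G j k) ^ (2 * m))"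
proof -
  have "G j k ^ m * G k j ^ m = G j k ^ m * st (G j k) ^ m" for j k
    by (simp only: assms[where j = j and k = k])
  then show ?thesis
    by (simp only:) (intro order_trans[OF norm_sum] sum_mono order_trans[OF norm_sum]
        norm_power_mult_star_power)
qed

end

lemma sum_sum_le_diag_plus_Max_offdiag:
  fixes f :: "nat \<Rightarrow> nat \<Rightarrow> real"
  shows "(\<Sum>j=1..n. \<Sum>k=1..n. f j k)
    \<le> (\<Sum>j=1..n. f j j) + (real n ^ 2 - real n) * Max {f j k | j k. j \<in> {1..n} \<and> k \<in> {1..n} \<and> j \<noteq> k}"
proof -
  define M where "M = Max {f j k | j k. j \<in> {1..n} \<and> k \<in> {1..n} \<and> j \<noteq> k}"
  have "finite {f j k | j k. j \<in> {1..n} \<and> k \<in> {1..n} \<and> j \<noteq> k}"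
    by (rule finite_subset[of _ "(\<lambda>(j, k). f j k) ` ({1..n} \<times> {1..n})"]) auto
  then have le_M: "f j k \<le> M" if "j \<in> {1..n}" "k \<in> {1..n} - {j}" for j k
    unfolding M_def by (rule Max_ge) (use that in blast)
  have "(\<Sum>j=1..n. \<Sum>k=1..n. f j k) = (\<Sum>j=1..n. f j j + (\<Sum>k\<in>{1..n} - {j}. f j k))"
    by (intro sum.cong refl) (simp add: sum.remove)
  also have "\<dots> \<le> (\<Sum>j=1..n. f j j + (\<Sum>k\<in>{1..n} - {j}. M))"
    by (intro sum_mono add_left_mono) (simp add: le_M)
  also have "\<dots> = (\<Sum>j=1..n. f j j) + (\<Sum>j=1..n. (real n - 1) * M)"
    by (simp add: sum.distrib)
  also have "\<dots> = (\<Sum>j=1..n. f j j) + (real n ^ 2 - real n) * M"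
    by (simp add: power2_eq_square algebra_simps)
  finally show ?thesis
    unfolding M_def .
qed

lemma hilbert_cstar_module_comm_cstar: "hilbert_cstar_module st ii act ip \<Longrightarrow> comm_cstar st ii"
  unfolding hilbert_cstar_module_def comm_cstar_def by (elim conjE)

lemma
  assumes "hilbert_cstar_module st ii act ip"
  shows inner_add_left: "ip (x + y) z = ip x z + ip y z"
    and inner_act_left: "ip (act a x) z = a * ip x z"
    and inner_commute_star: "ip y x = st (ip x y)"
proof -
  have lin: "ip (act a x + y) z = a * ip x z + ip y z" and act_one: "act 1 x = x" for a x y z
    using assms unfolding hilbert_cstar_module_def by (elim conjE; metis)+
  have add: "ip (x + y) z = ip x z + ip y z" for x y z
    using lin[of 1 x y z] act_one[of x] by simp
  then show "ip (x + y) z = ip x z + ip y z" .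
  have "ip 0 z = 0"
    using add[of 0 0 z] by simp
  then show "ip (act a x) z = a * ip x z"
    using lin[of a x 0 z] by simp
  show "ip y x = st (ip x y)"
    using assms unfolding hilbert_cstar_module_def by (elim conjE) metis
qed

lemma inner_sum_left:
  assumes "hilbert_cstar_module st ii act ip"
  shows "ip (sum f A) z = (\<Sum>i\<in>A. ip (f i) z)"
proof -
  have "ip 0 z = 0"
    using inner_add_left[OF assms, of 0 0 z] by simp
  then show ?thesis
    by (induction A rule: infinite_finite_induct) (simp_all add: inner_add_left[OF assms])
qed

lemma inner_eq_sum_basis:
  assumes hm: "hilbert_cstar_module st ii act ip"
    and expansion: "\<And>x. x = (\<Sum>i=1..d. act (ip x (\<omega> i)) (\<omega> i))"
  shows "ip x y = (\<Sum>i=1..d. ip x (\<omega> i) * st (ip y (\<omega> i)))"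
proof -
  have "ip x y = ip (\<Sum>i=1..d. act (ip x (\<omega> i)) (\<omega> i)) y"
    by (rule arg_cong[where f = "\<lambda>v. ip v y", OF expansion])
  also have "\<dots> = (\<Sum>i=1..d. ip x (\<omega> i) * ip (\<omega> i) y)"
    by (simp add: inner_sum_left[OF hm] inner_act_left[OF hm])
  also have "\<dots> = (\<Sum>i=1..d. ip x (\<omega> i) * st (ip y (\<omega> i)))"
    by (simp only: inner_commute_star[OF hm, where x = y])
  finally show ?thesis .
qed

lemma inner_power_eq_sum_sym_tensor_coord:
  assumes hm: "hilbert_cstar_module st ii act ip"
    and expansion: "\<And>x. x = (\<Sum>i=1..d. act (ip x (\<omega> i)) (\<omega> i))"
  shows "ip x y ^ m = (\<Sum>\<alpha>\<in>weak_compositions d m.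
    sym_tensor_coord (\<lambda>i. ip x (\<omega> i)) m \<alpha> * st (sym_tensor_coord (\<lambda>i. ip y (\<omega> i)) m \<alpha>))"
proof -
  interpret comm_cstar st ii
    using hm by (rule hilbert_cstar_module_comm_cstar)
  have "ip x y = (\<Sum>i=1..d. ip x (\<omega> i) * st (ip y (\<omega> i)))"
    by (rule inner_eq_sum_basis[OF hm expansion])
  then show ?thesis
    by (simp only: star_sym_tensor_coord sum_sym_tensor_coord_mult)
qed

lemma welch_bound_inner_power:
  assumes hm: "hilbert_cstar_module st ii act ip"
    and expansion: "\<And>x. x = (\<Sum>i=1..d. act (ip x (\<omega> i)) (\<omega> i))"
  shows "csa_le st ((1 / real ((d + m - 1) choose m)) *\<^sub>R (\<Sum>j\<in>J. ip (\<tau> j) (\<tau> j) ^ m)\<^sup>2)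
    (\<Sum>j\<in>J. \<Sum>k\<in>J. ip (\<tau> j) (\<tau> k) ^ m * ip (\<tau> k) (\<tau> j) ^ m)"
proof -
  interpret comm_cstar st ii
    using hm by (rule hilbert_cstar_module_comm_cstar)
  show ?thesis
    using welch_bound[where G = "\<lambda>j k. ip (\<tau> j) (\<tau> k) ^ m" and J = J,
        OF finite_weak_compositions inner_power_eq_sum_sym_tensor_coord[OF hm expansion]]
    by (simp only: card_weak_compositions)
qed

lemma max_offdiag_inner_power_lower_bound:
  assumes hm: "hilbert_cstar_module st ii act ip"
    and expansion: "\<And>x. x = (\<Sum>i=1..d. act (ip x (\<omega> i)) (\<omega> i))"
    and unit: "\<forall>j\<in>{1..n}. ip (\<tau> j) (\<tau> j) = 1"
    and "n \<ge> 2"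
  shows "csa_le st ((1 / (real n ^ 2 - real n)) *\<^sub>R
      ((1 / real ((d + m - 1) choose m)) *\<^sub>R (\<Sum>j=1..n. ip (\<tau> j) (\<tau> j) ^ m)\<^sup>2
        - (\<Sum>j=1..n. hm_norm ip (\<tau> j) ^ (4 * m)) *\<^sub>R 1))
    (Max {norm (ip (\<tau> j) (\<tau> k)) ^ (2 * m) | j k. j \<in> {1..n} \<and> k \<in> {1..n} \<and> j \<noteq> k} *\<^sub>R 1)"
proof -
  interpret comm_cstar st ii
    using hm by (rule hilbert_cstar_module_comm_cstar)
  define C where "C = real ((d + m - 1) choose m)"
  define M where "M = Max {norm (ip (\<tau> j) (\<tau> k)) ^ (2 * m) | j k. j \<in> {1..n} \<and> k \<in> {1..n} \<and> j \<noteq> k}"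
  define X where "X = (\<Sum>j=1..n. \<Sum>k=1..n. ip (\<tau> j) (\<tau> k) ^ m * ip (\<tau> k) (\<tau> j) ^ m)"
  have trace: "(\<Sum>j=1..n. ip (\<tau> j) (\<tau> j) ^ m) = (real n) *\<^sub>R 1"
    using unit by (simp add: scaleR_conv_of_real)
  have welch_lhs: "(1 / C) *\<^sub>R (\<Sum>j=1..n. ip (\<tau> j) (\<tau> j) ^ m)\<^sup>2 = (real n ^ 2 / C) *\<^sub>R 1"
    unfolding trace by (simp add: power2_eq_square)
  have "csa_le st ((real n ^ 2 / C) *\<^sub>R 1) X"
    using welch_bound_inner_power[OF hm expansion, of m \<tau> "{1..n}"]
    unfolding C_def[symmetric] X_def[symmetric] welch_lhs .
  then have "real n ^ 2 / C \<le> norm X"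
    by (intro le_norm_if_csa_le) (simp_all add: C_def)
  also have "norm X \<le> (\<Sum>j=1..n. \<Sum>k=1..n. norm (ip (\<tau> j) (\<tau> k)) ^ (2 * m))"
    unfolding X_def by (rule norm_frame_potential_le) (rule inner_commute_star[OF hm])
  also have "\<dots> \<le> real n + (real n ^ 2 - real n) * M"
    using sum_sum_le_diag_plus_Max_offdiag[of "\<lambda>j k. norm (ip (\<tau> j) (\<tau> k)) ^ (2 * m)" n] unit
    by (simp add: M_def)
  finally have "(real n ^ 2 / C - real n) / (real n ^ 2 - real n) \<le> M"
    using \<open>n \<ge> 2\<close> by (simp add: pos_divide_le_eq power2_eq_square algebra_simps)
  moreover have "(\<Sum>j=1..n. hm_norm ip (\<tau> j) ^ (4 * m)) = real n"
    using unit by (simp add: hm_norm_def)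
  then have "(1 / (real n ^ 2 - real n)) *\<^sub>R ((1 / C) *\<^sub>R (\<Sum>j=1..n. ip (\<tau> j) (\<tau> j) ^ m)\<^sup>2
      - (\<Sum>j=1..n. hm_norm ip (\<tau> j) ^ (4 * m)) *\<^sub>R 1)
      = ((real n ^ 2 / C - real n) / (real n ^ 2 - real n)) *\<^sub>R 1"
    by (simp only: welch_lhs scaleR_diff_left[symmetric] scaleR_scaleR) simp
  ultimately show ?thesis
    using csa_le_scaleR_one unfolding M_def[symmetric] C_def[symmetric] by simp
qed

theorem theorem2p15:
  fixes st :: "'a::{real_normed_algebra_1,comm_ring_1,banach} \<Rightarrow> 'a"
    and ii :: 'a
    and act :: "'a \<Rightarrow> 'e::ab_group_add \<Rightarrow> 'e"
    and ip :: "'e \<Rightarrow> 'e \<Rightarrow> 'a"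
    and d n m :: nat
    and \<tau> :: "nat \<Rightarrow> 'e"
  assumes "aw_star_algebra st ii"
    and "hilbert_cstar_module st ii act ip"
    and "has_rank act ip d"
    and "n \<ge> d"
    and "\<forall>j\<in>{1..n}. ip (\<tau> j) (\<tau> j) = 1"
    and "m \<ge> 1"
  shows
    "csa_le st (\<Sum>j=1..n. \<Sum>k=1..n. ip (\<tau> j) (\<tau> k) ^ m * ip (\<tau> k) (\<tau> j) ^ m)
               ((\<Sum>j=1..n. \<Sum>k=1..n. norm (ip (\<tau> j) (\<tau> k)) ^ (2 * m)) *\<^sub>R 1)
     \<and> csa_le st ((1 / real ((d + m - 1) choose m)) *\<^sub>R (\<Sum>j=1..n. ip (\<tau> j) (\<tau> j) ^ m)\<^sup>2)
               (\<Sum>j=1..n. \<Sum>k=1..n. ip (\<tau> j) (\<tau> k) ^ m * ip (\<tau> k) (\<tau> j) ^ m)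
     \<and> csa_le st (\<Sum>j=1..n. \<Sum>k=1..n. ip (\<tau> j) (\<tau> k) * ip (\<tau> k) (\<tau> j))
               ((\<Sum>j=1..n. \<Sum>k=1..n. norm (ip (\<tau> j) (\<tau> k)) ^ 2) *\<^sub>R 1)
     \<and> csa_le st ((1 / real d) *\<^sub>R (\<Sum>j=1..n. ip (\<tau> j) (\<tau> j))\<^sup>2)
               (\<Sum>j=1..n. \<Sum>k=1..n. ip (\<tau> j) (\<tau> k) * ip (\<tau> k) (\<tau> j))
     \<and> (n \<ge> 2 \<longrightarrow>
          csa_le st ((1 / (real n ^ 2 - real n)) *\<^sub>R
                       ((1 / real ((d + m - 1) choose m)) *\<^sub>R (\<Sum>j=1..n. ip (\<tau> j) (\<tau> j) ^ m)\<^sup>2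
                        - (\<Sum>j=1..n. hm_norm ip (\<tau> j) ^ (4 * m)) *\<^sub>R 1))
                    (Max {norm (ip (\<tau> j) (\<tau> k)) ^ (2 * m) | j k.
                            j \<in> {1..n} \<and> k \<in> {1..n} \<and> j \<noteq> k} *\<^sub>R 1)
        \<and> csa_le st ((1 / (real n ^ 2 - real n)) *\<^sub>R
                       ((1 / real d) *\<^sub>R (\<Sum>j=1..n. ip (\<tau> j) (\<tau> j))\<^sup>2
                        - (\<Sum>j=1..n. hm_norm ip (\<tau> j) ^ 4) *\<^sub>R 1))
                    (Max {norm (ip (\<tau> j) (\<tau> k)) ^ 2 | j k.
                            j \<in> {1..n} \<and> k \<in> {1..n} \<and> j \<noteq> k} *\<^sub>R 1))"
proof -
  interpret comm_cstar st ii
    using assms(2) by (rule hilbert_cstar_module_comm_cstar)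
  obtain \<omega> where expansion: "\<And>x. x = (\<Sum>i=1..d. act (ip x (\<omega> i)) (\<omega> i))"
    using assms(3) unfolding has_rank_def by blast
  note upper = frame_potential_le_norms[where G = "\<lambda>j k. ip (\<tau> j) (\<tau> k)" and J = "{1..n}",
      OF inner_commute_star[OF assms(2)]]
  note lower = welch_bound_inner_power[OF assms(2) expansion, where \<tau> = \<tau> and J = "{1..n}"]
  note max_offdiag = max_offdiag_inner_power_lower_bound[OF assms(2) expansion assms(5)]
  show ?thesis
    using upper[where m = m] upper[where m = 1] lower[where m = m] lower[where m = 1]
      max_offdiag[where m = m] max_offdiag[where m = 1]
    by simp
qed

end
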